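(* Let $\mathbf{A}'$ be an $n\times d$ matrix, $k\ge1$, $\varepsilon\in(0,1)$, with maximum coverage optimum (with $k$ subsets) $\mathbf{OPT}\le C_1 k\log d/\varepsilon^2$ for a constant $C_1$. Let $b=O(k\log d/\varepsilon^2)$ and $t=O(\log(d/\varepsilon))$ (with sufficiently large constants), and for each $i\in[t]$ independently hash each row of $\mathbf{A}'$ uniformly and independently into one of $b$ buckets. Then with probability $1-1/\mathrm{poly}(d)$, every nonzero item $x$ has some $i\in[t]$ for which, in iteration $i$, $x$ is hashed to a bucket containing (1) no other large item, and (2) at most $O\!\left(\frac{d\log(1/\varepsilon)}{\varepsilon k}\right)$ nonzero entries from small items.
   Context: Item $i$ belongs to subset (column) $j$ iff $A'_{ij}\ne0$; $\mathbf{OPT}$ is the maximum over sets of $k$ columns of the number of rows with a nonzero entry in one of those columns. A row is large if it has at least $d/k$ nonzero entries and small otherwise. A nonzero item is a row of $\mathbf{A}'$ containing at least one nonzero entry. *)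

theory Defs
  imports Complex_Main "HOL-Library.FuncSet"
begin

text \<open>The matrix A' is an n x d real matrix given as a function on indices;
  rows (items) are 0..<n, columns (subsets) are 0..<d.\<close>

definition nnz_row :: "(nat \<Rightarrow> nat \<Rightarrow> real) \<Rightarrow> nat \<Rightarrow> nat \<Rightarrow> nat" where
  "nnz_row A d x = card {j \<in> {..<d}. A x j \<noteq> 0}"

definition nonzero_item :: "(nat \<Rightarrow> nat \<Rightarrow> real) \<Rightarrow> nat \<Rightarrow> nat \<Rightarrow> bool" where
  "nonzero_item A d x \<longleftrightarrow> (\<exists>j<d. A x j \<noteq> 0)"

definition coverage :: "(nat \<Rightarrow> nat \<Rightarrow> real) \<Rightarrow> nat \<Rightarrow> nat set \<Rightarrow> nat" where
  "coverage A n S = card {x \<in> {..<n}. \<exists>j\<in>S. A x j \<noteq> 0}"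

definition OPT :: "(nat \<Rightarrow> nat \<Rightarrow> real) \<Rightarrow> nat \<Rightarrow> nat \<Rightarrow> nat \<Rightarrow> nat" where
  "OPT A n d k = Max {coverage A n S | S. S \<subseteq> {..<d} \<and> card S = k}"

definition large :: "(nat \<Rightarrow> nat \<Rightarrow> real) \<Rightarrow> nat \<Rightarrow> nat \<Rightarrow> nat \<Rightarrow> bool" where
  "large A d k x \<longleftrightarrow> real (nnz_row A d x) \<ge> real d / real k"

text \<open>All t independent hash functions, each mapping rows 0..<n to buckets 0..<b;
  the uniform distribution on this finite set models independent uniform hashing.\<close>
definition hash_space :: "nat \<Rightarrow> nat \<Rightarrow> nat \<Rightarrow> (nat \<Rightarrow> nat \<Rightarrow> nat) set" where
  "hash_space n b t = PiE {..<t} (\<lambda>_. PiE {..<n} (\<lambda>_. {..<b}))"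

definition good_iteration ::
  "(nat \<Rightarrow> nat \<Rightarrow> real) \<Rightarrow> nat \<Rightarrow> nat \<Rightarrow> nat \<Rightarrow> real \<Rightarrow> (nat \<Rightarrow> nat) \<Rightarrow> nat \<Rightarrow> bool" where
  "good_iteration A n d k B h x \<longleftrightarrow>
     (\<forall>y<n. y \<noteq> x \<and> large A d k y \<longrightarrow> h y \<noteq> h x) \<and>
     real (\<Sum>y\<in>{y. y < n \<and> \<not> large A d k y \<and> h y = h x}. nnz_row A d y) \<le> B"

definition all_good ::
  "(nat \<Rightarrow> nat \<Rightarrow> real) \<Rightarrow> nat \<Rightarrow> nat \<Rightarrow> nat \<Rightarrow> real \<Rightarrow> nat \<Rightarrow> (nat \<Rightarrow> nat \<Rightarrow> nat) \<Rightarrow> bool" where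
  "all_good A n d k B t H \<longleftrightarrow>
     (\<forall>x<n. nonzero_item A d x \<longrightarrow> (\<exists>i<t. good_iteration A n d k B (H i) x))"

definition success_prob ::
  "(nat \<Rightarrow> nat \<Rightarrow> real) \<Rightarrow> nat \<Rightarrow> nat \<Rightarrow> nat \<Rightarrow> real \<Rightarrow> nat \<Rightarrow> nat \<Rightarrow> real" where
  "success_prob A n d k B b t =
     real (card {H \<in> hash_space n b t. all_good A n d k B t H}) / real (card (hash_space n b t))"

end

theory Submission
  imports Defs
begin

(*
  Give item y the weight w(y) = min 1 (k nnz(y) / d): a large item weighs 1, a small one
  k/d per nonzero entry. Running greedy maximum coverage for k steps covers at least half of
  the total weight W, so W <= 2 OPT. If x's bucket contains another large item, or more than
  2d/k small-item entries (at most d/k of them can be x's own), then the items colliding with x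
  have total weight at least 1. The expected colliding weight is at most W/b <= 1/2, so x fails
  a single iteration with probability at most 1/2 and all t iterations with probability at most
  2^-t. A union bound over the at most (d/k) W = O(d log d / eps^2) nonzero items gives failure
  probability d^-c once t >= K log(d/eps). The bucket budget is only used in the weaker form
  B >= 2d/k.
*)

definition item_weight :: "(nat \<Rightarrow> nat \<Rightarrow> real) \<Rightarrow> nat \<Rightarrow> nat \<Rightarrow> nat \<Rightarrow> real" where
  "item_weight A d k y = min 1 (real k * real (nnz_row A d y) / real d)"

lemma item_weight_nonneg: "0 \<le> item_weight A d k y"
  by (simp add: item_weight_def)

lemma item_weight_le_one: "item_weight A d k y \<le> 1"
  by (simp add: item_weight_def)

lemma item_weight_le: "real d * item_weight A d k y \<le> real k * real (nnz_row A d y)"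
proof (cases "d = 0")
  case False
  then have "real d * item_weight A d k y \<le> real d * (real k * real (nnz_row A d y) / real d)"
    by (intro mult_left_mono) (auto simp: item_weight_def)
  with False show ?thesis
    by simp
qed simp

lemma item_weight_large:
  assumes "0 < k" "0 < d" "large A d k y"
  shows "item_weight A d k y = 1"
  using assms by (simp add: item_weight_def large_def field_simps)

lemma item_weight_small:
  assumes "0 < k" "0 < d" "\<not> large A d k y"
  shows "item_weight A d k y = real k * real (nnz_row A d y) / real d"
  using assms by (simp add: item_weight_def large_def field_simps)

lemma item_weight_nonzero_item:
  assumes "k \<le> d" "nonzero_item A d y"
  shows "real k / real d \<le> item_weight A d k y"
proof -
  have "{j \<in> {..<d}. A y j \<noteq> 0} \<noteq> {}"
    using assms(2) by (auto simp: nonzero_item_def)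
  then have "1 \<le> nnz_row A d y"
    by (simp add: nnz_row_def Suc_le_eq card_gt_0_iff)
  then have "real k \<le> real k * real (nnz_row A d y)"
    by (simp add: mult_le_cancel_left1)
  then have "real k / real d \<le> real k * real (nnz_row A d y) / real d"
    by (rule divide_right_mono) simp
  moreover have "real k / real d \<le> 1"
    using assms(1) by (cases "d = 0") (simp_all add: divide_le_eq_1)
  ultimately show ?thesis
    by (simp add: item_weight_def)
qed

definition uncovered :: "(nat \<Rightarrow> nat \<Rightarrow> real) \<Rightarrow> nat \<Rightarrow> nat set \<Rightarrow> nat set" where
  "uncovered A n S = {y \<in> {..<n}. \<forall>j\<in>S. A y j = 0}"

lemma finite_uncovered [simp]: "finite (uncovered A n S)"
  by (simp add: uncovered_def)

lemma uncovered_antimono: "S \<subseteq> T \<Longrightarrow> uncovered A n T \<subseteq> uncovered A n S"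
  by (auto simp: uncovered_def)

lemma sum_card_column_support:
  assumes "finite Y"
  shows "(\<Sum>j<d. card {y \<in> Y. A y j \<noteq> 0}) = (\<Sum>y\<in>Y. nnz_row A d y)"
proof -
  have "(\<Sum>j<d. card {y \<in> Y. A y j \<noteq> 0}) = (\<Sum>j<d. \<Sum>y\<in>Y. of_bool (A y j \<noteq> 0))"
    using assms by (simp add: Int_def)
  also have "\<dots> = (\<Sum>y\<in>Y. \<Sum>j<d. of_bool (A y j \<noteq> 0))"
    by (rule sum.swap)
  also have "\<dots> = (\<Sum>y\<in>Y. nnz_row A d y)"
    by (simp add: nnz_row_def Int_def)
  finally show ?thesis .
qed

lemma exists_column_covering_weight:
  fixes w :: "nat \<Rightarrow> real"
  assumes "0 < d" "0 < k" and w: "\<And>y. real d * w y \<le> real k * real (nnz_row A d y)"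
  shows "\<exists>j<d. (\<Sum>y\<in>uncovered A n S. w y) / real k \<le> card {y \<in> uncovered A n S. A y j \<noteq> 0}"
proof (rule ccontr)
  let ?U = "uncovered A n S"
  let ?W = "(\<Sum>y\<in>?U. w y) / real k"
  assume "\<not> ?thesis"
  then have "(\<Sum>j<d. real (card {y \<in> ?U. A y j \<noteq> 0})) < (\<Sum>j<d. ?W)"
    using assms(1) by (intro sum_strict_mono) (auto simp: not_le)
  also have "\<dots> = (\<Sum>y\<in>?U. real d * w y) / real k"
    by (simp add: sum_distrib_left)
  also have "\<dots> \<le> (\<Sum>y\<in>?U. real k * real (nnz_row A d y)) / real k"
    by (intro divide_right_mono sum_mono w) simp
  also have "\<dots> = (\<Sum>y\<in>?U. real (nnz_row A d y))"
    using assms(2) by (simp add: sum_distrib_left[symmetric])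
  also have "\<dots> = (\<Sum>j<d. real (card {y \<in> ?U. A y j \<noteq> 0}))"
    by (simp flip: of_nat_sum add: sum_card_column_support)
  finally show False
    by simp
qed

lemma coverage_insert:
  "coverage A n (insert j S) = coverage A n S + card {y \<in> uncovered A n S. A y j \<noteq> 0}"
proof -
  have "{x \<in> {..<n}. \<exists>i\<in>insert j S. A x i \<noteq> 0} =
      {x \<in> {..<n}. \<exists>i\<in>S. A x i \<noteq> 0} \<union> {y \<in> uncovered A n S. A y j \<noteq> 0}"
    by (auto simp: uncovered_def)
  then show ?thesis
    unfolding coverage_def by (simp only:) (rule card_Un_disjoint, auto simp: uncovered_def)
qed

lemma greedy_coverage:
  fixes w :: "nat \<Rightarrow> real"
  assumes "0 < d" "0 < k" and w0: "\<And>y. 0 \<le> w y"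
    and w: "\<And>y. real d * w y \<le> real k * real (nnz_row A d y)"
  shows "\<exists>S\<subseteq>{..<d}. card S \<le> i \<and>
    real i / real k * (\<Sum>y\<in>uncovered A n S. w y) \<le> coverage A n S"
proof (induction i)
  case 0
  show ?case by (intro exI[of _ "{}"]) simp
next
  case (Suc i)
  then obtain S where S: "S \<subseteq> {..<d}" "card S \<le> i"
    and cov: "real i / real k * (\<Sum>y\<in>uncovered A n S. w y) \<le> coverage A n S"
    by blast
  obtain j where j: "j < d"
    and cnt: "(\<Sum>y\<in>uncovered A n S. w y) / real k \<le> card {y \<in> uncovered A n S. A y j \<noteq> 0}"
    using exists_column_covering_weight[OF assms(1,2) w] by blast
  have "(\<Sum>y\<in>uncovered A n (insert j S). w y) \<le> (\<Sum>y\<in>uncovered A n S. w y)"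
    by (intro sum_mono2 uncovered_antimono w0) auto
  then have "real (Suc i) / real k * (\<Sum>y\<in>uncovered A n (insert j S). w y)
      \<le> real (Suc i) / real k * (\<Sum>y\<in>uncovered A n S. w y)"
    by (intro mult_left_mono) auto
  also have "\<dots> = real i / real k * (\<Sum>y\<in>uncovered A n S. w y) + (\<Sum>y\<in>uncovered A n S. w y) / real k"
    by (simp add: add_divide_distrib distrib_right)
  also have "\<dots> \<le> coverage A n (insert j S)"
    using cov cnt by (simp add: coverage_insert)
  finally have "real (Suc i) / real k * (\<Sum>y\<in>uncovered A n (insert j S). w y) \<le> coverage A n (insert j S)" .
  moreover have "card (insert j S) \<le> Suc i"
    using S finite_subset[OF S(1)] by (simp add: card_insert_if)
  ultimately show ?case
    using S j by (intro exI[of _ "insert j S"]) auto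
qed

lemma sum_covered_weight_le_coverage:
  fixes w :: "nat \<Rightarrow> real"
  assumes "\<And>y. w y \<le> 1"
  shows "(\<Sum>y<n. w y) - (\<Sum>y\<in>uncovered A n S. w y) \<le> coverage A n S"
proof -
  let ?C = "{x \<in> {..<n}. \<exists>j\<in>S. A x j \<noteq> 0}"
  have "(\<Sum>y\<in>?C. w y) + (\<Sum>y\<in>uncovered A n S. w y) = (\<Sum>y\<in>?C \<union> uncovered A n S. w y)"
    by (rule sum.union_disjoint[symmetric]) (auto simp: uncovered_def)
  also have "?C \<union> uncovered A n S = {..<n}"
    by (auto simp: uncovered_def)
  finally have "(\<Sum>y<n. w y) = (\<Sum>y\<in>?C. w y) + (\<Sum>y\<in>uncovered A n S. w y)" ..
  moreover have "(\<Sum>y\<in>?C. w y) \<le> real (card ?C)"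
    using sum_mono[of ?C w "\<lambda>_. 1"] assms by simp
  ultimately show ?thesis
    by (simp add: coverage_def)
qed

lemma coverage_le_OPT:
  assumes "S \<subseteq> {..<d}" "card S \<le> k" "k \<le> d"
  shows "coverage A n S \<le> OPT A n d k"
proof -
  have "finite S" using assms(1) finite_subset by blast
  moreover have "k - card S \<le> card ({..<d} - S)"
    using assms \<open>finite S\<close> by (simp add: card_Diff_subset)
  ultimately obtain T where T: "T \<subseteq> {..<d} - S" "card T = k - card S" "finite T"
    by (meson obtain_subset_with_card_n)
  have "card (S \<union> T) = card S + card T"
    using T \<open>finite S\<close> by (intro card_Un_disjoint) auto
  then have "card (S \<union> T) = k" "S \<union> T \<subseteq> {..<d}"
    using T assms by auto
  have "coverage A n S \<le> coverage A n (S \<union> T)"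
    unfolding coverage_def by (intro card_mono) auto
  also have "\<dots> \<le> OPT A n d k"
    unfolding OPT_def
  proof (rule Max_ge)
    have "{coverage A n S |S. S \<subseteq> {..<d} \<and> card S = k} \<subseteq> coverage A n ` Pow {..<d}"
      by auto
    then show "finite {coverage A n S |S. S \<subseteq> {..<d} \<and> card S = k}"
      by (rule finite_subset) simp
    show "coverage A n (S \<union> T) \<in> {coverage A n S |S. S \<subseteq> {..<d} \<and> card S = k}"
      using \<open>card (S \<union> T) = k\<close> \<open>S \<union> T \<subseteq> {..<d}\<close> by blast
  qed
  finally show ?thesis .
qed

lemma sum_item_weight_le_OPT:
  assumes "1 \<le> k" "k \<le> d"
  shows "(\<Sum>y<n. item_weight A d k y) \<le> 2 * real (OPT A n d k)"
proof -
  obtain S where S: "S \<subseteq> {..<d}" "card S \<le> k"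
    and "real k / real k * (\<Sum>y\<in>uncovered A n S. item_weight A d k y) \<le> coverage A n S"
    using greedy_coverage[where w="item_weight A d k" and i=k and A=A and n=n,
        OF _ _ item_weight_nonneg item_weight_le] assms
    by auto
  then have "(\<Sum>y\<in>uncovered A n S. item_weight A d k y) \<le> coverage A n S"
    using assms by simp
  moreover have "(\<Sum>y<n. item_weight A d k y) - (\<Sum>y\<in>uncovered A n S. item_weight A d k y) \<le> coverage A n S"
    by (rule sum_covered_weight_le_coverage[OF item_weight_le_one])
  moreover have "coverage A n S \<le> OPT A n d k"
    using coverage_le_OPT[OF S assms(2)] .
  ultimately show ?thesis
    by linarith
qed

lemma card_PiE_collision_le:
  assumes "finite I" "finite B" "x \<in> I" "y \<in> I" "x \<noteq> y"
  shows "card {h \<in> PiE I (\<lambda>_. B). h y = h x} \<le> card B ^ (card I - 1)"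
proof -
  let ?drop_y = "\<lambda>h. restrict h (I - {y})"
  have "inj_on ?drop_y {h \<in> PiE I (\<lambda>_. B). h y = h x}"
  proof (rule inj_onI)
    fix h h' assume h: "h \<in> {h \<in> PiE I (\<lambda>_. B). h y = h x}"
      and h': "h' \<in> {h \<in> PiE I (\<lambda>_. B). h y = h x}" and eq: "?drop_y h = ?drop_y h'"
    have agree: "h z = h' z" if "z \<in> I" for z
    proof (cases "z = y")
      case True
      then show ?thesis
        using h h' fun_cong[OF eq, of x] assms(3,5) by auto
    next
      case False
      then show ?thesis
        using fun_cong[OF eq, of z] that by auto
    qed
    show "h = h'"
      by (rule PiE_ext[of h I "\<lambda>_. B" h']) (use h h' agree in auto)
  qed
  moreover have "?drop_y ` {h \<in> PiE I (\<lambda>_. B). h y = h x} \<subseteq> PiE (I - {y}) (\<lambda>_. B)"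
  proof (rule image_subsetI)
    fix h assume "h \<in> {h \<in> PiE I (\<lambda>_. B). h y = h x}"
    then show "?drop_y h \<in> PiE (I - {y}) (\<lambda>_. B)"
      by (simp add: restrict_PiE_iff PiE_iff)
  qed
  ultimately have "card {h \<in> PiE I (\<lambda>_. B). h y = h x} \<le> card (PiE (I - {y}) (\<lambda>_. B))"
    using assms(1,2) by (intro card_inj_on_le) (auto intro: finite_PiE)
  also have "\<dots> = card B ^ (card I - 1)"
    using assms by (simp add: card_PiE)
  finally show ?thesis .
qed

lemma card_le_sum_if_one_le:
  fixes g :: "'a \<Rightarrow> real"
  assumes "finite H" "\<And>h. h \<in> H \<Longrightarrow> 0 \<le> g h" "\<And>h. h \<in> H \<Longrightarrow> P h \<Longrightarrow> 1 \<le> g h"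
  shows "real (card {h \<in> H. P h}) \<le> (\<Sum>h\<in>H. g h)"
proof -
  have "real (card {h \<in> H. P h}) = (\<Sum>h\<in>{h \<in> H. P h}. 1)"
    by simp
  also have "\<dots> \<le> (\<Sum>h\<in>{h \<in> H. P h}. g h)"
    using assms(3) by (intro sum_mono) auto
  also have "\<dots> \<le> (\<Sum>h\<in>H. g h)"
    using assms(1,2) by (intro sum_mono2) auto
  finally show ?thesis .
qed

definition collision_weight ::
  "(nat \<Rightarrow> nat \<Rightarrow> real) \<Rightarrow> nat \<Rightarrow> nat \<Rightarrow> nat \<Rightarrow> (nat \<Rightarrow> nat) \<Rightarrow> nat \<Rightarrow> real" where
  "collision_weight A n d k h x = (\<Sum>y\<in>{y \<in> {..<n} - {x}. h y = h x}. item_weight A d k y)"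

lemma collision_weight_nonneg: "0 \<le> collision_weight A n d k h x"
  by (simp add: collision_weight_def sum_nonneg item_weight_nonneg)

text \<open>x itself accounts for fewer than d/k of the small-item entries in its bucket, so the other
  small items there carry more than d/k entries, i.e. weight above 1.\<close>
lemma one_le_collision_weight_if_not_good:
  assumes "0 < k" "0 < d" "2 * real d / real k \<le> B" "\<not> good_iteration A n d k B h x"
  shows "1 \<le> collision_weight A n d k h x"
proof (cases "\<exists>y<n. y \<noteq> x \<and> large A d k y \<and> h y = h x")
  case True
  then obtain y where y: "y < n" "y \<noteq> x" "large A d k y" "h y = h x"
    by blast
  then have "item_weight A d k y \<le> collision_weight A n d k h x"
    unfolding collision_weight_def by (intro member_le_sum) (auto simp: item_weight_nonneg)
  with y assms(1,2) show ?thesis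
    by (simp add: item_weight_large)
next
  case False
  define Sm where "Sm = {y. y < n \<and> \<not> large A d k y \<and> h y = h x}"
  have "finite Sm"
    by (simp add: Sm_def)
  have "B < (\<Sum>y\<in>Sm. real (nnz_row A d y))"
    using assms(4) False by (auto simp: good_iteration_def Sm_def not_le)
  also have "\<dots> \<le> (\<Sum>y\<in>Sm - {x}. real (nnz_row A d y)) + real d / real k"
  proof (cases "x \<in> Sm")
    case True
    then have "real (nnz_row A d x) < real d / real k"
      by (simp add: Sm_def large_def)
    with True \<open>finite Sm\<close> show ?thesis
      by (simp add: sum.remove)
  qed simp
  finally have "real d / real k < (\<Sum>y\<in>Sm - {x}. real (nnz_row A d y))"
    using assms(3) by simp
  then have "real k / real d * (real d / real k) < real k / real d * (\<Sum>y\<in>Sm - {x}. real (nnz_row A d y))"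
    using assms(1,2) by (intro mult_strict_left_mono) auto
  also have "\<dots> = (\<Sum>y\<in>Sm - {x}. item_weight A d k y)"
    using assms(1,2) by (simp add: sum_distrib_left Sm_def item_weight_small)
  also have "\<dots> \<le> collision_weight A n d k h x"
    unfolding collision_weight_def
    by (intro sum_mono2) (auto simp: Sm_def item_weight_nonneg)
  finally show ?thesis
    using assms(1,2) by simp
qed

lemma sum_collision_weight_le:
  assumes "x < n"
  shows "(\<Sum>h\<in>PiE {..<n} (\<lambda>_. {..<b}). collision_weight A n d k h x)
    \<le> (\<Sum>y<n. item_weight A d k y) * real b ^ (n - 1)"
proof -
  let ?H = "PiE {..<n} (\<lambda>_. {..<b})"
  have "(\<Sum>h\<in>?H. collision_weight A n d k h x)
      = (\<Sum>h\<in>?H. \<Sum>y\<in>{..<n} - {x}. item_weight A d k y * of_bool (h y = h x))"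
    by (simp add: collision_weight_def Int_def)
  also have "\<dots> = (\<Sum>y\<in>{..<n} - {x}. item_weight A d k y * real (card {h \<in> ?H. h y = h x}))"
    by (subst sum.swap) (simp add: sum_distrib_left[symmetric] Int_def finite_PiE)
  also have "\<dots> \<le> (\<Sum>y\<in>{..<n} - {x}. item_weight A d k y * real b ^ (n - 1))"
  proof (rule sum_mono)
    fix y assume y: "y \<in> {..<n} - {x}"
    have "card {h \<in> ?H. h y = h x} \<le> card {..<b} ^ (card {..<n} - 1)"
      using y assms by (intro card_PiE_collision_le) auto
    then have "real (card {h \<in> ?H. h y = h x}) \<le> real b ^ (n - 1)"
      using of_nat_mono by fastforce
    then show "item_weight A d k y * real (card {h \<in> ?H. h y = h x}) \<le> item_weight A d k y * real b ^ (n - 1)"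
      by (rule mult_left_mono) (rule item_weight_nonneg)
  qed
  also have "\<dots> \<le> (\<Sum>y<n. item_weight A d k y * real b ^ (n - 1))"
    by (intro sum_mono2) (auto simp: item_weight_nonneg)
  finally show ?thesis
    by (simp add: sum_distrib_right)
qed

lemma card_not_good_iteration_le:
  assumes "0 < k" "0 < d" "x < n" "2 * real d / real k \<le> B"
  shows "real (card {h \<in> PiE {..<n} (\<lambda>_. {..<b}). \<not> good_iteration A n d k B h x})
    \<le> (\<Sum>y<n. item_weight A d k y) * real b ^ (n - 1)"
proof -
  have "real (card {h \<in> PiE {..<n} (\<lambda>_. {..<b}). \<not> good_iteration A n d k B h x})
      \<le> (\<Sum>h\<in>PiE {..<n} (\<lambda>_. {..<b}). collision_weight A n d k h x)"
    using assms by (intro card_le_sum_if_one_le collision_weight_nonneg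
        one_le_collision_weight_if_not_good) (auto intro: finite_PiE)
  also have "\<dots> \<le> (\<Sum>y<n. item_weight A d k y) * real b ^ (n - 1)"
    using assms(3) by (rule sum_collision_weight_le)
  finally show ?thesis .
qed

lemma card_PiE_always_bad_le:
  assumes "finite I" "finite X" "\<And>x. x \<in> X \<Longrightarrow> finite (Bad x)"
  shows "card {H \<in> PiE I (\<lambda>_. H1). \<exists>x\<in>X. \<forall>i\<in>I. H i \<in> Bad x} \<le> (\<Sum>x\<in>X. card (Bad x) ^ card I)"
proof -
  have "{H \<in> PiE I (\<lambda>_. H1). \<exists>x\<in>X. \<forall>i\<in>I. H i \<in> Bad x} \<subseteq> (\<Union>x\<in>X. PiE I (\<lambda>_. Bad x))"
    by (fastforce simp: PiE_iff)
  then have "card {H \<in> PiE I (\<lambda>_. H1). \<exists>x\<in>X. \<forall>i\<in>I. H i \<in> Bad x} \<le> card (\<Union>x\<in>X. PiE I (\<lambda>_. Bad x))"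
    using assms by (intro card_mono finite_UN_I finite_PiE) auto
  also have "\<dots> \<le> (\<Sum>x\<in>X. card (PiE I (\<lambda>_. Bad x)))"
    using assms(2) by (rule card_UN_le)
  finally show ?thesis
    using assms(1) by (simp add: card_PiE)
qed

lemma success_prob_eq:
  assumes "0 < b"
  shows "success_prob A n d k B b t
    = 1 - real (card {H \<in> hash_space n b t. \<not> all_good A n d k B t H}) / real (card (hash_space n b t))"
proof -
  let ?HS = "hash_space n b t"
  let ?Fail = "{H \<in> ?HS. \<not> all_good A n d k B t H}"
  have "finite ?HS"
    by (simp add: hash_space_def finite_PiE)
  moreover have "0 < card ?HS"
    using assms by (simp add: hash_space_def card_PiE)
  moreover have "{H \<in> ?HS. all_good A n d k B t H} = ?HS - ?Fail"
    by blast
  ultimately have "real (card {H \<in> ?HS. all_good A n d k B t H}) = real (card ?HS) - real (card ?Fail)"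
    by (simp add: card_Diff_subset card_mono)
  with \<open>0 < card ?HS\<close> show ?thesis
    by (simp add: success_prob_def diff_divide_distrib)
qed

lemma success_prob_ge:
  assumes "0 < k" "0 < d" "0 < b" "2 * real d / real k \<le> B"
    and "2 * (\<Sum>y<n. item_weight A d k y) \<le> real b"
  shows "1 - real (card {x \<in> {..<n}. nonzero_item A d x}) / 2 ^ t \<le> success_prob A n d k B b t"
proof -
  define H1 where "H1 = PiE {..<n} (\<lambda>_. {..<b})"
  define Bad where "Bad x = {h \<in> H1. \<not> good_iteration A n d k B h x}" for x
  define NZ where "NZ = {x \<in> {..<n}. nonzero_item A d x}"
  define Fail where "Fail = {H \<in> hash_space n b t. \<not> all_good A n d k B t H}"
  have card_bad: "real (card (Bad x)) \<le> real b ^ n / 2" if "x < n" for x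
  proof -
    have "real (card (Bad x)) \<le> (\<Sum>y<n. item_weight A d k y) * real b ^ (n - 1)"
      unfolding Bad_def H1_def using assms(1,2) that assms(4) by (rule card_not_good_iteration_le)
    also have "\<dots> \<le> real b / 2 * real b ^ (n - 1)"
      using assms(5) by (intro mult_right_mono) auto
    also have "\<dots> = real b ^ n / 2"
      using that by (cases n) auto
    finally show ?thesis .
  qed
  have "Fail = {H \<in> PiE {..<t} (\<lambda>_. H1). \<exists>x\<in>NZ. \<forall>i\<in>{..<t}. H i \<in> Bad x}"
    by (auto simp: Fail_def hash_space_def H1_def Bad_def NZ_def all_good_def PiE_iff)
  then have "card Fail \<le> (\<Sum>x\<in>NZ. card (Bad x) ^ t)"
    using card_PiE_always_bad_le[of "{..<t}" NZ Bad H1]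
    by (simp add: NZ_def Bad_def H1_def finite_PiE)
  then have "real (card Fail) \<le> (\<Sum>x\<in>NZ. real (card (Bad x)) ^ t)"
    unfolding of_nat_power[symmetric] of_nat_sum[symmetric] of_nat_le_iff .
  also have "\<dots> \<le> (\<Sum>x\<in>NZ. (real b ^ n / 2) ^ t)"
    by (intro sum_mono power_mono card_bad) (auto simp: NZ_def)
  also have "\<dots> = real (card NZ) / 2 ^ t * real (card (hash_space n b t))"
    by (simp add: hash_space_def card_PiE power_divide power_mult)
  finally have "real (card Fail) / real (card (hash_space n b t)) \<le> real (card NZ) / 2 ^ t"
    using assms(3) by (simp add: hash_space_def card_PiE divide_le_eq)
  then show ?thesis
    unfolding success_prob_eq[OF assms(3)] Fail_def NZ_def by simp
qed

lemma card_nonzero_items_le_OPT: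
  assumes "1 \<le> k" "k \<le> d"
  shows "real (card {x \<in> {..<n}. nonzero_item A d x}) \<le> 2 * real d / real k * real (OPT A n d k)"
proof -
  let ?NZ = "{x \<in> {..<n}. nonzero_item A d x}"
  have "real k / real d * real (card ?NZ) = (\<Sum>x\<in>?NZ. real k / real d)"
    by simp
  also have "\<dots> \<le> (\<Sum>x\<in>?NZ. item_weight A d k x)"
    using assms(2) by (intro sum_mono item_weight_nonzero_item) auto
  also have "\<dots> \<le> (\<Sum>y<n. item_weight A d k y)"
    by (intro sum_mono2) (auto simp: item_weight_nonneg)
  also have "\<dots> \<le> 2 * real (OPT A n d k)"
    using assms by (rule sum_item_weight_le_OPT)
  finally show ?thesis
    using assms by (simp add: field_simps)
qed

text \<open>With q = d/\<epsilon> and M = max 0 (log 2 C): N \<le> C q^2 \<le> q powr (M + 2), while 2^t \<ge> q powr (2 + c + M).\<close>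
lemma divide_two_power_le_inverse_powr:
  fixes C c Kt \<epsilon> N :: real and d t :: nat
  assumes "0 < C" "0 \<le> c" "2 \<le> d" "0 < \<epsilon>" "\<epsilon> < 1"
    and Kt: "2 + c + max 0 (log 2 C) \<le> Kt * ln 2"
    and t: "Kt * ln (real d / \<epsilon>) \<le> real t"
    and N: "N \<le> C * real d * ln (real d) / \<epsilon>\<^sup>2"
  shows "N / 2 ^ t \<le> 1 / real d powr c"
proof -
  define q where "q = real d / \<epsilon>"
  define M where "M = max 0 (log 2 C)"
  have "real d \<le> q"
    using assms(3-5) by (simp add: q_def field_simps)
  then have q: "2 \<le> q" "0 < ln q"
    using assms(3) by auto
  have "C * real d * ln (real d) / \<epsilon>\<^sup>2 \<le> C * real d * real d / \<epsilon>\<^sup>2"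
    using assms(1,3) by (intro divide_right_mono mult_left_mono less_imp_le[OF ln_less_self]) auto
  with N have "N \<le> C * real d * real d / \<epsilon>\<^sup>2"
    by linarith
  also have "\<dots> = C * q\<^sup>2"
    by (simp add: q_def power2_eq_square)
  also have "\<dots> \<le> q powr (M + 2)"
  proof -
    have "C = 2 powr log 2 C"
      using assms(1) by simp
    also have "\<dots> \<le> 2 powr M"
      by (simp add: M_def)
    also have "\<dots> \<le> q powr M"
      using q by (intro powr_mono2) (auto simp: M_def)
    finally have "C \<le> q powr M" .
    with q show ?thesis
      by (simp add: powr_add mult_right_mono)
  qed
  finally have N_le: "N \<le> q powr (M + 2)" .
  have "(2 + c + M) * ln q \<le> Kt * ln 2 * ln q"
    using Kt q by (intro mult_right_mono) (auto simp: M_def)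
  also have "\<dots> \<le> real t * ln 2"
    using t by (simp add: q_def mult.commute mult_left_mono)
  finally have exponent: "(2 + c + M) * ln q \<le> real t * ln 2" .
  have "q powr (2 + c + M) = exp ((2 + c + M) * ln q)"
    using q by (simp add: powr_def)
  also have "\<dots> \<le> exp (real t * ln 2)"
    using exponent by simp
  also have "\<dots> = 2 ^ t"
    by (simp add: exp_of_nat_mult)
  finally have "q powr (2 + c + M) \<le> 2 ^ t" .
  then have "N / 2 ^ t \<le> q powr (M + 2) / q powr (2 + c + M)"
    using N_le q by (intro frac_le) auto
  also have "\<dots> = 1 / q powr c"
    using q by (simp add: powr_add field_simps)
  also have "\<dots> \<le> 1 / real d powr c"
    using \<open>real d \<le> q\<close> assms(2,3) by (intro divide_left_mono powr_mono2) auto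
  finally show ?thesis .
qed

lemma success_prob_lower_bound:
  fixes C1 c Kb Kt \<epsilon> :: real
  assumes "0 < C1" "0 \<le> c" "4 * C1 \<le> Kb" "2 + c + max 0 (log 2 (2 * C1)) \<le> Kt * ln 2"
    and "2 \<le> d" "1 \<le> k" "k \<le> d" "0 < \<epsilon>" "\<epsilon> < 1"
    and OPT: "real (OPT A n d k) \<le> C1 * real k * ln (real d) / \<epsilon>\<^sup>2"
  shows "1 - 1 / real d powr c \<le> success_prob A n d k
    (2 * real d * max 1 (ln (1 / \<epsilon>)) / (\<epsilon> * real k))
    (nat \<lceil>Kb * real k * ln (real d) / \<epsilon>\<^sup>2\<rceil>) (nat \<lceil>Kt * ln (real d / \<epsilon>)\<rceil>)"
proof -
  let ?W = "\<Sum>y<n. item_weight A d k y"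
  let ?NZ = "{x \<in> {..<n}. nonzero_item A d x}"
  let ?b = "nat \<lceil>Kb * real k * ln (real d) / \<epsilon>\<^sup>2\<rceil>"
  let ?t = "nat \<lceil>Kt * ln (real d / \<epsilon>)\<rceil>"
  have kd: "0 < k" "0 < d" "0 < ln (real d)"
    using assms(5,6) by auto
  have W: "?W \<le> 2 * (C1 * real k * ln (real d) / \<epsilon>\<^sup>2)"
    using sum_item_weight_le_OPT[OF assms(6,7), of A n] OPT by linarith
  have "2 * ?W \<le> 4 * C1 * (real k * ln (real d) / \<epsilon>\<^sup>2)"
    using W by simp
  also have "\<dots> \<le> Kb * (real k * ln (real d) / \<epsilon>\<^sup>2)"
    using assms(3) kd by (intro mult_right_mono) auto
  also have "\<dots> \<le> real ?b"
    using real_nat_ceiling_ge by (simp add: mult.assoc)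
  finally have b: "2 * ?W \<le> real ?b" .
  have "0 < Kb * real k * ln (real d) / \<epsilon>\<^sup>2"
    using assms(1,3,8) kd by simp
  then have "0 < ?b"
    by simp
  have "2 * real d / real k * 1 \<le> 2 * real d / real k * (max 1 (ln (1 / \<epsilon>)) / \<epsilon>)"
    using assms(8,9) by (intro mult_left_mono) (auto simp: field_simps)
  then have B: "2 * real d / real k \<le> 2 * real d * max 1 (ln (1 / \<epsilon>)) / (\<epsilon> * real k)"
    by (simp add: field_simps)
  have "real (card ?NZ) \<le> 2 * real d / real k * real (OPT A n d k)"
    by (rule card_nonzero_items_le_OPT[OF assms(6,7)])
  also have "\<dots> \<le> 2 * real d / real k * (C1 * real k * ln (real d) / \<epsilon>\<^sup>2)"
    using OPT by (intro mult_left_mono) auto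
  also have "\<dots> = 2 * C1 * real d * ln (real d) / \<epsilon>\<^sup>2"
    using kd by (simp add: field_simps)
  finally have "real (card ?NZ) / 2 ^ ?t \<le> 1 / real d powr c"
    using assms(1,2,4,5,8,9)
    by (intro divide_two_power_le_inverse_powr[where C="2 * C1" and Kt=Kt and \<epsilon>=\<epsilon>])
      (auto simp: real_nat_ceiling_ge)
  then show ?thesis
    using success_prob_ge[OF kd(1,2) \<open>0 < ?b\<close> B b, of ?t] by linarith
qed

theorem lemma10:
  fixes C1 c :: real
  assumes "C1 > 0" and "c > 0"
  shows "\<exists>C3>0. \<exists>K0. \<forall>Kb Kt. Kb \<ge> K0 \<and> Kt \<ge> K0 \<longrightarrow>
    (\<forall>(A :: nat \<Rightarrow> nat \<Rightarrow> real) (n::nat) (d::nat) (k::nat) (\<epsilon>::real).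
       2 \<le> d \<longrightarrow> 1 \<le> k \<longrightarrow> k \<le> d \<longrightarrow> 0 < \<epsilon> \<longrightarrow> \<epsilon> < 1 \<longrightarrow>
       real (OPT A n d k) \<le> C1 * real k * ln (real d) / \<epsilon>\<^sup>2 \<longrightarrow>
       success_prob A n d k
         (C3 * real d * max 1 (ln (1 / \<epsilon>)) / (\<epsilon> * real k))
         (nat \<lceil>Kb * real k * ln (real d) / \<epsilon>\<^sup>2\<rceil>)
         (nat \<lceil>Kt * ln (real d / \<epsilon>)\<rceil>)
       \<ge> 1 - 1 / real d powr c)"
proof -
  define K0 where "K0 = max (4 * C1) ((2 + c + max 0 (log 2 (2 * C1))) / ln 2)"
  have "4 * C1 \<le> Kb" "2 + c + max 0 (log 2 (2 * C1)) \<le> Kt * ln 2"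
    if "K0 \<le> Kb \<and> K0 \<le> Kt" for Kb Kt
    using that by (auto simp: K0_def pos_divide_le_eq)
  with success_prob_lower_bound[OF assms(1) less_imp_le[OF assms(2)]] show ?thesis
    by (intro exI[of _ 2] conjI exI[of _ K0] allI impI) auto
qed

end
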